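(* Let $F$ be a CNF formula over variables $x_1,\dots,x_n$ with clauses $C_1,\dots,C_m$ of two or three literals each. Let $R$ be the triple set and $H=(V,A)$ the hypergraph constructed from $F$ as described in the context. Let $A'\subseteq A$, and suppose $A'$ contains a cyclic path $P$ from $\alpha\beta$ to $c_{m+1}\gamma$. Then the triple set $\mathrm{triples}(A')$ is inconsistent.
   Context: **Triples and trees.** A rooted triple $pq|o$, with $p,q,o$ distinct leaves and unordered in $p,q$, is displayed by a rooted binary tree $T$ if the path from $p$ to $q$ is node-disjoint from the path from $o$ to the root. A triple set is consistent if some rooted binary tree displays all its triples, and inconsistent otherwise. **Triples and arcs.** The triple $pq|o$ corresponds to the hyperarc $\mathrm{arc}(pq|o)=\{p,q\}\to\{\{p,o\},\{q,o\}\}$, and $\mathrm{triples}(A')$ is the set of triples corresponding to arcs of $A'$. We write $pq$ for $\{p,q\}$. **Hypergraph notions.** A hyperarc $u\to\{v,v'\}$ has tail $u$ and heads $\{v,v'\}$. A path from $u_0$ to $u_\ell$ is a sequence of distinct arcs $(a_1,\dots,a_\ell)$ with $\mathrm{t}(a_1)=u_0$, $u_\ell\in\mathrm{h}(a_\ell)$, and $\mathrm{t}(a_{k+1})\in\mathrm{h}(a_k)$. An arc $a_k$ is a back-arc if some $k'<k$ has $\mathrm{t}(a_{k'})\in\mathrm{h}(a_k)$. The path is cyclic if it has a back-arc. **Construction.** Use leaves - $x_i^j,\bar x_i^j,y_i^j,\bar y_i^j$ for $i\in[n]$, $j\in[m]$; - $b_i,b'_i$ for $i\in[n+1]$; - $c_j,d_j$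 for $j\in[m]$; - $c_{m+1}$, and $\alpha,\beta,\gamma$. The triple set $R$ is the union of the following groups. (i) For each $i\in[n]$: - $b_ib'_i|x_i^1$ and $b'_ix_i^1|y_i^1$; - $x_i^jy_i^j|x_i^{j+1}$ and $y_i^jx_i^{j+1}|y_i^{j+1}$ for $1\le j\le m-1$; - $x_i^my_i^m|b_{i+1}$ and $y_i^mb_{i+1}|b'_{i+1}$. (ii) For each $i\in[n]$: - $b_ib'_i|\bar x_i^1$ and $b'_i\bar x_i^1|\bar y_i^1$; - $\bar x_i^j\bar y_i^j|\bar x_i^{j+1}$ and $\bar y_i^j\bar x_i^{j+1}|\bar y_i^{j+1}$ for $1\le j\le m-1$; - $\bar x_i^m\bar y_i^m|b_{i+1}$ and $\bar x_i^mb_{i+1}|b'_{i+1}$. (iii) For each clause $C_j$: - for each positive occurrence of $x_i$ in $C_j$, the triples $c_jd_j|x_i^j$, $c_jx_i^j|y_i^j$, $c_jy_i^j|c_{j+1}$; - for each negative occurrence of $x_i$ in $C_j$, the same triples with $\bar x_i^j,\bar y_i^j$ in place of $x_i^j,y_i^j$; - if $j<m$, the triple $c_jc_{j+1}|d_{j+1}$. (iv) Connecting triples: $\alpha\beta|b_1$, $\beta b_1|b'_1$, $b_{n+1}b'_{n+1}|c_1$, $b'_{n+1}c_1|d_1$, $c_mc_{m+1}|\gamma$. Then $A=\{\mathrm{arc}(t):t\in R\}$, and $V$ is the set of leaf pairs occurring in arcs of $A$. *)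

theory Defs
  imports Main "HOL-Library.Sublist"
begin

text \<open>X i j = x_i^j, XB i j = bar x_i^j, Y i j = y_i^j, YB i j = bar y_i^j,
  B i = b_i, B' i = b'_i, Cc j = c_j, D j = d_j.\<close>
datatype leaf = X nat nat | XB nat nat | Y nat nat | YB nat nat
  | B nat | B' nat | Cc nat | D nat | Alpha | Beta | Gamma

text \<open>A triple (p, q, r) stands for pq|r.\<close>
type_synonym triple = "leaf \<times> leaf \<times> leaf"

datatype 'a tree = Lf 'a | Nd "'a tree" "'a tree"

text \<open>Nodes are addressed by bool lists (path from the root); lpos t gives the
  leaves together with their addresses.\<close>
fun lpos :: "'a tree \<Rightarrow> ('a \<times> bool list) set" where
  "lpos (Lf a) = {(a, [])}"
| "lpos (Nd l r) = {(a, False # p) | a p. (a, p) \<in> lpos l}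
                 \<union> {(a, True # p) | a p. (a, p) \<in> lpos r}"

definition labels_distinct :: "'a tree \<Rightarrow> bool" where
  "labels_distinct t \<longleftrightarrow> (\<forall>a u v. (a, u) \<in> lpos t \<and> (a, v) \<in> lpos t \<longrightarrow> u = v)"

text \<open>Node set of the path between nodes u and v: ancestors of u or v that are
  not strictly above their lowest common ancestor.\<close>
definition path_nodes :: "bool list \<Rightarrow> bool list \<Rightarrow> bool list set" where
  "path_nodes u v = {w. (prefix w u \<or> prefix w v) \<and>
      \<not> (\<exists>w'. prefix w' u \<and> prefix w' v \<and> strict_prefix w w')}"

definition root_path_nodes :: "bool list \<Rightarrow> bool list set" where
  "root_path_nodes u = {w. prefix w u}"

definition displays :: "leaf tree \<Rightarrow> triple \<Rightarrow> bool" where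
  "displays t tr = (case tr of (p, q, r) \<Rightarrow>
     p \<noteq> q \<and> p \<noteq> r \<and> q \<noteq> r \<and>
     (\<exists>up uq uo. (p, up) \<in> lpos t \<and> (q, uq) \<in> lpos t \<and> (r, uo) \<in> lpos t \<and>
        path_nodes up uq \<inter> root_path_nodes uo = {}))"

definition consistent :: "triple set \<Rightarrow> bool" where
  "consistent S \<longleftrightarrow> (\<exists>t. labels_distinct t \<and> (\<forall>tr\<in>S. displays t tr))"

text \<open>Vertices are leaf pairs (2-element sets); a hyperarc is (tail, heads).\<close>
type_synonym hvert = "leaf set"
type_synonym harc = "hvert \<times> hvert set"

definition arc :: "triple \<Rightarrow> harc" where
  "arc tr = (case tr of (p, q, r) \<Rightarrow> ({p, q}, {{p, r}, {q, r}}))"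

definition tl_arc :: "harc \<Rightarrow> hvert" where "tl_arc a = fst a"
definition hd_arc :: "harc \<Rightarrow> hvert set" where "hd_arc a = snd a"

definition triples :: "harc set \<Rightarrow> triple set" where
  "triples A' = {(p, q, r). p \<noteq> q \<and> p \<noteq> r \<and> q \<noteq> r \<and> arc (p, q, r) \<in> A'}"

definition hpath :: "harc set \<Rightarrow> harc list \<Rightarrow> hvert \<Rightarrow> hvert \<Rightarrow> bool" where
  "hpath A' P u0 ul \<longleftrightarrow> P \<noteq> [] \<and> distinct P \<and> set P \<subseteq> A' \<and>
     tl_arc (P ! 0) = u0 \<and> ul \<in> hd_arc (last P) \<and>
     (\<forall>k. Suc k < length P \<longrightarrow> tl_arc (P ! Suc k) \<in> hd_arc (P ! k))"

definition back_arc :: "harc list \<Rightarrow> nat \<Rightarrow> bool" where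
  "back_arc P k \<longleftrightarrow> k < length P \<and> (\<exists>k'<k. tl_arc (P ! k') \<in> hd_arc (P ! k))"

definition cyclic :: "harc list \<Rightarrow> bool" where
  "cyclic P \<longleftrightarrow> (\<exists>k. back_arc P k)"

text \<open>A CNF formula with variables x_1..x_n and clauses C_1..C_m is given by
  cl :: nat => (nat * bool) set; literal (i, True) is x_i, (i, False) is not x_i.\<close>

definition R :: "nat \<Rightarrow> nat \<Rightarrow> (nat \<Rightarrow> (nat \<times> bool) set) \<Rightarrow> triple set" where
  "R n m cl =
     (\<Union>i\<in>{1..n}.
        {(B i, B' i, X i 1), (B' i, X i 1, Y i 1),
         (X i m, Y i m, B (Suc i)), (Y i m, B (Suc i), B' (Suc i))}
        \<union> (\<Union>j\<in>{1..m-1}. {(X i j, Y i j, X i (Suc j)), (Y i j, X i (Suc j), Y i (Suc j))}))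
   \<union> (\<Union>i\<in>{1..n}.
        {(B i, B' i, XB i 1), (B' i, XB i 1, YB i 1),
         (XB i m, YB i m, B (Suc i)), (XB i m, B (Suc i), B' (Suc i))}
        \<union> (\<Union>j\<in>{1..m-1}. {(XB i j, YB i j, XB i (Suc j)), (YB i j, XB i (Suc j), YB i (Suc j))}))
   \<union> (\<Union>j\<in>{1..m}.
        (\<Union>i\<in>{i. (i, True) \<in> cl j}.
           {(Cc j, D j, X i j), (Cc j, X i j, Y i j), (Cc j, Y i j, Cc (Suc j))})
        \<union> (\<Union>i\<in>{i. (i, False) \<in> cl j}.
           {(Cc j, D j, XB i j), (Cc j, XB i j, YB i j), (Cc j, YB i j, Cc (Suc j))})
        \<union> (if j < m then {(Cc j, Cc (Suc j), D (Suc j))} else {}))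
   \<union> {(Alpha, Beta, B 1), (Beta, B 1, B' 1), (B (Suc n), B' (Suc n), Cc 1),
      (B' (Suc n), Cc 1, D 1), (Cc m, Cc (Suc m), Gamma)}"

definition hA :: "nat \<Rightarrow> nat \<Rightarrow> (nat \<Rightarrow> (nat \<times> bool) set) \<Rightarrow> harc set" where
  "hA n m cl = arc ` R n m cl"

definition hV :: "nat \<Rightarrow> nat \<Rightarrow> (nat \<Rightarrow> (nat \<times> bool) set) \<Rightarrow> hvert set" where
  "hV n m cl = (\<Union>a\<in>hA n m cl. insert (tl_arc a) (hd_arc a))"

end

theory Submission
  imports Defs
begin

text \<open>Fix a tree displaying triples(A') and rank every leaf pair by the depth of the lowest
  common ancestor of its two leaves. A displayed triple pq|r puts lca(p, r) and lca(q, r)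
  strictly above lca(p, q), so along each hyperarc the rank strictly decreases from the tail to
  both heads. Hence the tails of a path have strictly decreasing ranks, whereas a back-arc leads
  from a later tail to an earlier one, i.e. to a larger rank.\<close>

lemma longest_common_prefix_commute:
  "longest_common_prefix xs ys = longest_common_prefix ys xs"
  by (induction xs ys rule: longest_common_prefix.induct) (auto elim: longest_common_prefix.elims)

lemma longest_common_prefix_in_path_nodes: "longest_common_prefix u v \<in> path_nodes u v"
  unfolding path_nodes_def
  using longest_common_prefix_prefix1[of u v] longest_common_prefix_max_prefix[of _ u v]
  by (auto simp: strict_prefix_def dest: prefix_order.antisym)

lemma length_longest_common_prefix_less:
  assumes "\<not> prefix (longest_common_prefix u v) w"
  shows "length (longest_common_prefix u w) < length (longest_common_prefix u v)"
proof -
  let ?uv = "longest_common_prefix u v" and ?uw = "longest_common_prefix u w"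
  have "prefix ?uv ?uw \<or> prefix ?uw ?uv"
    using longest_common_prefix_prefix1[of u v] longest_common_prefix_prefix1[of u w]
    by (rule prefix_same_cases)
  moreover have "\<not> prefix ?uv ?uw"
    using assms longest_common_prefix_prefix2[of u w] by (meson prefix_order.trans)
  ultimately have "strict_prefix ?uw ?uv" by (auto simp: strict_prefix_def)
  then show ?thesis by (rule prefix_length_less)
qed

definition leaf_addr :: "'a tree \<Rightarrow> 'a \<Rightarrow> bool list" where
  "leaf_addr t a = (THE u. (a, u) \<in> lpos t)"

definition lca_depth :: "'a tree \<Rightarrow> 'a \<Rightarrow> 'a \<Rightarrow> nat" where
  "lca_depth t p q = length (longest_common_prefix (leaf_addr t p) (leaf_addr t q))"

definition pair_depth :: "'a tree \<Rightarrow> 'a set \<Rightarrow> nat" where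
  "pair_depth t s = (THE k. \<exists>p q. s = {p, q} \<and> p \<noteq> q \<and> k = lca_depth t p q)"

lemma leaf_addr_eq:
  assumes "labels_distinct t" and "(a, u) \<in> lpos t"
  shows "leaf_addr t a = u"
  using assms unfolding leaf_addr_def labels_distinct_def by (intro the_equality) blast+

lemma lca_depth_commute: "lca_depth t p q = lca_depth t q p"
  unfolding lca_depth_def by (simp add: longest_common_prefix_commute)

lemma pair_depth_eq:
  assumes "p \<noteq> q"
  shows "pair_depth t {p, q} = lca_depth t p q"
  unfolding pair_depth_def
proof (rule the_equality)
  show "\<exists>p' q'. {p, q} = {p', q'} \<and> p' \<noteq> q' \<and> lca_depth t p q = lca_depth t p' q'"
    using assms by blast
next
  fix k
  assume "\<exists>p' q'. {p, q} = {p', q'} \<and> p' \<noteq> q' \<and> k = lca_depth t p' q'"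
  then show "k = lca_depth t p q"
    by (metis doubleton_eq_iff lca_depth_commute)
qed

lemma displays_lca_depth_less:
  assumes "labels_distinct t" and "displays t (p, q, r)"
  shows "lca_depth t p r < lca_depth t p q" and "lca_depth t q r < lca_depth t p q"
proof -
  from assms(2) obtain up uq ur where
    lpos: "(p, up) \<in> lpos t" "(q, uq) \<in> lpos t" "(r, ur) \<in> lpos t" and
    disjoint: "path_nodes up uq \<inter> root_path_nodes ur = {}"
    unfolding displays_def by auto
  have addr: "leaf_addr t p = up" "leaf_addr t q = uq" "leaf_addr t r = ur"
    using leaf_addr_eq[OF assms(1)] lpos by auto
  have not_prefix: "\<not> prefix (longest_common_prefix up uq) ur"
    using disjoint longest_common_prefix_in_path_nodes[of up uq]
    unfolding root_path_nodes_def by blast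
  then have "length (longest_common_prefix up ur) < length (longest_common_prefix up uq)"
    by (rule length_longest_common_prefix_less)
  moreover from not_prefix
  have "length (longest_common_prefix uq ur) < length (longest_common_prefix uq up)"
    by (intro length_longest_common_prefix_less) (simp add: longest_common_prefix_commute)
  ultimately show "lca_depth t p r < lca_depth t p q" and "lca_depth t q r < lca_depth t p q"
    using addr unfolding lca_depth_def by (simp_all add: longest_common_prefix_commute)
qed

lemma displays_pair_depth_heads_less:
  assumes "labels_distinct t" and "displays t tr" and "h \<in> hd_arc (arc tr)"
  shows "pair_depth t h < pair_depth t (tl_arc (arc tr))"
proof -
  obtain p q r where tr: "tr = (p, q, r)" by (cases tr)
  with assms(2) have "p \<noteq> q" "p \<noteq> r" "q \<noteq> r"
    unfolding displays_def by auto
  moreover have "h = {p, r} \<or> h = {q, r}"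
    using assms(3) tr unfolding hd_arc_def arc_def by auto
  ultimately show ?thesis
    using displays_lca_depth_less[OF assms(1,2)[unfolded tr]] tr
    by (auto simp: tl_arc_def arc_def pair_depth_eq)
qed

lemma hpath_tails_decreasing:
  fixes f :: "hvert \<Rightarrow> 'b :: order"
  assumes ranked: "\<And>a h. a \<in> A' \<Longrightarrow> h \<in> hd_arc a \<Longrightarrow> f h < f (tl_arc a)"
    and "hpath A' P u v" and "i < j" and "j < length P"
  shows "f (tl_arc (P ! j)) < f (tl_arc (P ! i))"
  using \<open>i < j\<close> \<open>j < length P\<close>
proof (induction i j rule: less_Suc_induct)
  case (1 i)
  with assms(2) have "P ! i \<in> A'" and "tl_arc (P ! Suc i) \<in> hd_arc (P ! i)"
    unfolding hpath_def by auto
  then show ?case by (rule ranked)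
next
  case (2 i j k)
  then show ?case by (auto intro: order.strict_trans)
qed

lemma hpath_ranked_not_cyclic:
  fixes f :: "hvert \<Rightarrow> 'b :: order"
  assumes ranked: "\<And>a h. a \<in> A' \<Longrightarrow> h \<in> hd_arc a \<Longrightarrow> f h < f (tl_arc a)"
    and path: "hpath A' P u v"
  shows "\<not> cyclic P"
proof
  assume "cyclic P"
  then obtain k k' where "k < length P" "k' < k" and back_tail: "tl_arc (P ! k') \<in> hd_arc (P ! k)"
    unfolding cyclic_def back_arc_def by auto
  moreover have "P ! k \<in> A'"
    using path \<open>k < length P\<close> unfolding hpath_def by auto
  ultimately have "f (tl_arc (P ! k')) < f (tl_arc (P ! k))"
    by (intro ranked)
  moreover have "f (tl_arc (P ! k)) < f (tl_arc (P ! k'))"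
    using hpath_tails_decreasing[of A' f, OF ranked path \<open>k' < k\<close> \<open>k < length P\<close>] .
  ultimately show False by simp
qed

lemma consistent_triples_hpath_not_cyclic:
  assumes "consistent (triples A')"
    and "A' \<subseteq> arc ` {(p, q, r). p \<noteq> q \<and> p \<noteq> r \<and> q \<noteq> r}"
    and "hpath A' P u v"
  shows "\<not> cyclic P"
proof -
  from assms(1) obtain t where "labels_distinct t" and displayed: "\<forall>tr\<in>triples A'. displays t tr"
    unfolding consistent_def by blast
  have "pair_depth t h < pair_depth t (tl_arc a)" if "a \<in> A'" "h \<in> hd_arc a" for a h
  proof -
    from \<open>a \<in> A'\<close> assms(2) obtain tr where "a = arc tr" "tr \<in> triples A'"
      unfolding triples_def by fastforce
    with \<open>labels_distinct t\<close> displayed \<open>h \<in> hd_arc a\<close> show ?thesis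
      using displays_pair_depth_heads_less by blast
  qed
  then show ?thesis
    using hpath_ranked_not_cyclic[OF _ assms(3)] by blast
qed

lemma hA_subset_arcs_of_distinct:
  "hA n m cl \<subseteq> arc ` {(p, q, r). p \<noteq> q \<and> p \<noteq> r \<and> q \<noteq> r}"
  unfolding hA_def R_def by (auto split: if_splits)

theorem lemma4:
  fixes n m :: nat and cl :: "nat \<Rightarrow> (nat \<times> bool) set"
    and A' :: "harc set" and P :: "harc list"
  assumes "1 \<le> m"
    and "\<forall>j\<in>{1..m}. card (cl j) = 2 \<or> card (cl j) = 3"
    and "\<forall>j\<in>{1..m}. \<forall>(i, s)\<in>cl j. i \<in> {1..n}"
    and "A' \<subseteq> hA n m cl"
    and "hpath A' P {Alpha, Beta} {Cc (Suc m), Gamma}"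
    and "cyclic P"
  shows "\<not> consistent (triples A')"
  using consistent_triples_hpath_not_cyclic[of A' P] hA_subset_arcs_of_distinct assms(4-6)
  by blast

end
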